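(* Let $K\subset\mathbb{R}^n$ be nonempty, convex, closed and bounded, let $C=\{x\in\mathbb{R}^m\mid Ax=b,\ x\ge0\}$ be nonempty and bounded, and let $f,h:\mathbb{R}^n\times\mathbb{R}^m\to\mathbb{R}$ be continuously differentiable functions such that, for every $y\in K$, $f(y,\cdot)$ and $h(y,\cdot)$ are convex, and such that $f$ takes only positive values. Let $y^*$ be an optimal solution of $(\widetilde{\mathcal{P}})$, let $x^*\in\widetilde{\mathcal{S}}(y^* )$, set $\alpha^*=h(y^*,x^* )$, $\beta^*=f(y^*,x^* )$ and $C^*=\{x\in C\mid h(y^*,x)\le\alpha^*,\ f(y^*,x)\le\beta^*\}$. Assume there exist $\varepsilon_0>0$ and $\delta>0$ such that for every $x\in C^*+\mathcal{B}(0,\varepsilon_0)$ there exists $\tilde x\in C^*$ with $$\|x-\tilde x\|^2\le\delta\Big[\big(h(y^*,x)-\alpha^*\big)^++\big(f(y^*,x)-\beta^*\big)^+\Big].$$ For every $\varepsilon>0$ let $y_\varepsilon$ be an optimal solution of $(\mathcal{P}_\varepsilon)$ and $x_\varepsilon\in\mathcal{S}_\varepsilon(y_\varepsilon)$. Then $f(y^*,x^* )-f(y_\varepsilon,x_\varepsilon)=o(\sqrt{\varepsilon})$ as $\varepsilon\to0$, and for every $\tau>0$, $f(y^*,x^* )-f(y_\varepsilon,x_\varepsilon)=o(\varepsilon^{1-\tau})$. Moreover, for every choice of $\tilde x_\varepsilon\in\mathcal{S}_\varepsilon(y^* )$ and every $\tau>0$, $h(y^*,\tilde x_\varepsilon)-h(y^*,x^*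 )=o(\varepsilon^{1-\tau})$ as $\varepsilon\to0$.
   Context: $f^2=(f)^2$; $t^+=\max\{t,0\}$; $\mathcal{B}(0,\varepsilon_0)$ is the open ball of radius $\varepsilon_0$ centred at $0$ in $\mathbb{R}^m$. For $y\in K$: $\mathcal{S}(y)=\operatorname{argmin}\{h(y,z)\mid z\in C\}$; for $\varepsilon>0$, $\mathcal{S}_\varepsilon(y)=\operatorname{argmin}\{h(y,z)+\varepsilon f^2(y,z)\mid z\in C\}$; $\widetilde{\mathcal{S}}(y)=\operatorname{argmin}\{f^2(y,z)\mid z\in\mathcal{S}(y)\}$. $(\mathcal{P}_\varepsilon)$: maximize $f(y,x)$ over $y\in K$, $x\in\mathcal{S}_\varepsilon(y)$; $y_\varepsilon\in K$ is optimal if $f(y_\varepsilon,x')\ge f(y,x)$ for all $x'\in\mathcal{S}_\varepsilon(y_\varepsilon)$, $y\in K$, $x\in\mathcal{S}_\varepsilon(y)$. $(\widetilde{\mathcal{P}})$: maximize $f(y,x)$ over $y\in K$, $x\in\widetilde{\mathcal{S}}(y)$; $y^*\in K$ is optimal if $f(y^*,x')\ge f(y,x)$ for all $x'\in\widetilde{\mathcal{S}}(y^* )$, $y\in K$, $x\in\widetilde{\mathcal{S}}(y)$. *)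

theory Defs
  imports "HOL-Analysis.Analysis" "HOL-Library.Landau_Symbols"
begin

definition argmin_set :: "('a \<Rightarrow> real) \<Rightarrow> 'a set \<Rightarrow> 'a set" where
  "argmin_set g D = {z \<in> D. \<forall>z'\<in>D. g z \<le> g z'}"

definition C1_fun :: "('a::real_normed_vector \<Rightarrow> 'b::real_normed_vector) \<Rightarrow> bool" where
  "C1_fun F \<longleftrightarrow> (\<exists>F'. (\<forall>z. (F has_derivative blinfun_apply (F' z)) (at z)) \<and> continuous_on UNIV F')"

definition polyset :: "real^'m^'p \<Rightarrow> real^'p \<Rightarrow> (real^'m) set" where
  "polyset A b = {x. A *v x = b \<and> (\<forall>i. 0 \<le> x $ i)}"

definition S_set :: "('y \<Rightarrow> 'x \<Rightarrow> real) \<Rightarrow> 'x set \<Rightarrow> 'y \<Rightarrow> 'x set" where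
  "S_set h C y = argmin_set (h y) C"

definition S_eps :: "('y \<Rightarrow> 'x \<Rightarrow> real) \<Rightarrow> ('y \<Rightarrow> 'x \<Rightarrow> real) \<Rightarrow> 'x set \<Rightarrow> real \<Rightarrow> 'y \<Rightarrow> 'x set" where
  "S_eps f h C \<epsilon> y = argmin_set (\<lambda>z. h y z + \<epsilon> * (f y z)\<^sup>2) C"

definition S_tilde :: "('y \<Rightarrow> 'x \<Rightarrow> real) \<Rightarrow> ('y \<Rightarrow> 'x \<Rightarrow> real) \<Rightarrow> 'x set \<Rightarrow> 'y \<Rightarrow> 'x set" where
  "S_tilde f h C y = argmin_set (\<lambda>z. (f y z)\<^sup>2) (S_set h C y)"

definition opt_P_eps :: "('y \<Rightarrow> 'x \<Rightarrow> real) \<Rightarrow> ('y \<Rightarrow> 'x \<Rightarrow> real) \<Rightarrow> 'y set \<Rightarrow> 'x set \<Rightarrow> real \<Rightarrow> 'y \<Rightarrow> bool" where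
  "opt_P_eps f h K C \<epsilon> ye \<longleftrightarrow> ye \<in> K \<and>
     (\<forall>x'\<in>S_eps f h C \<epsilon> ye. \<forall>y\<in>K. \<forall>x\<in>S_eps f h C \<epsilon> y. f ye x' \<ge> f y x)"

definition opt_P_tilde :: "('y \<Rightarrow> 'x \<Rightarrow> real) \<Rightarrow> ('y \<Rightarrow> 'x \<Rightarrow> real) \<Rightarrow> 'y set \<Rightarrow> 'x set \<Rightarrow> 'y \<Rightarrow> bool" where
  "opt_P_tilde f h K C ys \<longleftrightarrow> ys \<in> K \<and>
     (\<forall>x'\<in>S_tilde f h C ys. \<forall>y\<in>K. \<forall>x\<in>S_tilde f h C y. f ys x' \<ge> f y x)"

end

theory Submission
  imports Defs "HOL-Real_Asymp.Real_Asymp"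
begin

(* Both little-o rates follow from the stronger bound O(\<epsilon>). Put \<alpha> = h ystar xstar and
   \<beta> = f ystar xstar. Comparing any x \<in> S_\<epsilon>(ystar) with xstar \<in> S(ystar) gives f ystar x \<le> \<beta> and
   0 \<le> h ystar x - \<alpha> \<le> \<epsilon> (\<beta>^2 - (f ystar x)^2) \<le> 2 \<beta> \<epsilon> (\<beta> - f ystar x),
   which already yields the statement about h. The optimality of yeps \<epsilon> for (P_\<epsilon>) and of ystar
   for (P tilde) sandwich the value gap: 0 \<le> \<beta> - f (yeps \<epsilon>) (xeps \<epsilon>) \<le> \<beta> - f ystar x =: d.
   By compactness, x lies within \<epsilon>0 of C* once \<epsilon> is small, so the error bound provides
   x' \<in> C* \<subseteq> S(ystar) with |x - x'|^2 \<le> \<delta> (h ystar x - \<alpha>). Since f ystar x' \<ge> \<beta> and f ystar is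
   L-Lipschitz on C, d^2 \<le> L^2 |x - x'|^2 \<le> 2 L^2 \<delta> \<beta> \<epsilon> d, that is d \<le> 2 L^2 \<delta> \<beta> \<epsilon>. *)

lemma C1_fun_imp_continuous_on: "C1_fun F \<Longrightarrow> continuous_on S F"
  unfolding C1_fun_def
  by (metis continuous_at_imp_continuous_on has_derivative_continuous)

lemma C1_fun_imp_lipschitz_on:
  fixes F :: "'a::euclidean_space \<Rightarrow> 'b::real_normed_vector"
  assumes "C1_fun F" "bounded S"
  obtains L where "L-lipschitz_on S F"
proof -
  obtain F' where F': "\<And>z. (F has_derivative blinfun_apply (F' z)) (at z)"
    and cont: "continuous_on UNIV F'"
    using assms(1) unfolding C1_fun_def by blast
  obtain R where R: "S \<subseteq> cball 0 R"
    using bounded_subset_ballD[OF assms(2)] ball_subset_cball by blast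
  have "compact (F' ` cball 0 R)"
    by (intro compact_continuous_image continuous_on_subset[OF cont]) auto
  then obtain B where "B > 0" and B: "\<And>z. z \<in> cball 0 R \<Longrightarrow> norm (F' z) \<le> B"
    by (auto dest!: compact_imp_bounded simp: bounded_pos)
  have "norm (F a - F b) \<le> B * norm (a - b)" if "a \<in> cball 0 R" "b \<in> cball 0 R" for a b
    using B by (intro differentiable_bound[OF convex_cball has_derivative_at_withinI[OF F'] _ that])
      (simp add: norm_blinfun.rep_eq)
  then have "B-lipschitz_on (cball 0 R) F"
    using \<open>B > 0\<close> by (auto intro!: lipschitz_onI simp: dist_norm)
  with R show thesis
    using lipschitz_on_subset that by blast
qed

lemma continuous_on_slice:
  assumes "continuous_on UNIV (\<lambda>(y, x). F y x)"
  shows "continuous_on S (F y)"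
proof -
  have "continuous_on S ((\<lambda>(y, x). F y x) \<circ> Pair y)"
    by (intro continuous_on_compose continuous_intros continuous_on_subset[OF assms]) auto
  then show ?thesis by (simp add: o_def)
qed

lemma lipschitz_on_slice:
  assumes "L-lipschitz_on ({y} \<times> S) (\<lambda>(y, x). F y x)"
  shows "L-lipschitz_on S (F y)"
  using lipschitz_onD[OF assms] lipschitz_on_nonneg[OF assms]
  by (intro lipschitz_onI) (auto simp: dist_Pair_Pair)

lemma closed_polyset: "closed (polyset A b)"
  unfolding polyset_def
  by (intro closed_Collect_conj closed_Collect_all closed_Collect_le closed_Collect_eq continuous_intros)

lemma argmin_set_nonempty:
  assumes "compact D" "D \<noteq> {}" "continuous_on D g"
  shows "argmin_set g D \<noteq> {}"
  using continuous_attains_inf[OF assms] unfolding argmin_set_def by auto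

lemma compact_argmin_set:
  fixes g :: "'a::t2_space \<Rightarrow> real"
  assumes "compact D" "continuous_on D g"
  shows "compact (argmin_set g D)"
proof (cases "argmin_set g D = {}")
  case False
  then obtain z0 where z0: "z0 \<in> argmin_set g D" by blast
  then have "argmin_set g D = D \<inter> g -` {..g z0}"
    unfolding argmin_set_def by (auto intro: order_trans)
  moreover have "closed (D \<inter> g -` {..g z0})"
    by (rule continuous_closed_preimage[OF assms(2) compact_imp_closed[OF assms(1)] closed_atMost])
  ultimately show ?thesis
    using assms(1) by (metis compact_Int_closed inf.absorb_iff2 inf_le1)
qed simp

lemma S_tilde_nonempty:
  fixes C :: "'x::t2_space set"
  assumes "compact C" "C \<noteq> {}" "continuous_on C (f y)" "continuous_on C (h y)"
  shows "S_tilde f h C y \<noteq> {}"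
  unfolding S_tilde_def S_set_def
proof (rule argmin_set_nonempty)
  show "compact (argmin_set (h y) C)" "argmin_set (h y) C \<noteq> {}"
    using compact_argmin_set[OF assms(1,4)] argmin_set_nonempty[OF assms(1,2,4)] .
  show "continuous_on (argmin_set (h y) C) (\<lambda>z. (f y z)\<^sup>2)"
    using assms(3) by (auto intro!: continuous_intros intro: continuous_on_subset simp: argmin_set_def)
qed

lemma S_eps_nonempty:
  assumes "compact C" "C \<noteq> {}" "continuous_on C (f y)" "continuous_on C (h y)"
  shows "S_eps f h C \<epsilon> y \<noteq> {}"
  unfolding S_eps_def using assms by (intro argmin_set_nonempty continuous_intros)

lemma near_joint_sublevel_set:
  fixes C :: "'a::metric_space set" and g k :: "'a \<Rightarrow> real" and \<alpha> \<beta> :: real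
  assumes "compact C" "continuous_on C k" "continuous_on C g" "e > 0"
  obtains d where "d > 0"
    "\<And>x. x \<in> C \<Longrightarrow> g x \<le> \<beta> \<Longrightarrow> k x < \<alpha> + d \<Longrightarrow> \<exists>c\<in>C. k c \<le> \<alpha> \<and> g c \<le> \<beta> \<and> dist x c < e"
proof -
  define Cs where "Cs = {c \<in> C. k c \<le> \<alpha> \<and> g c \<le> \<beta>}"
  define F where "F = (C \<inter> g -` {..\<beta>}) \<inter> (\<Inter>c\<in>Cs. {x. e \<le> dist x c})"
  have "closed (C \<inter> g -` {..\<beta>})"
    by (rule continuous_closed_preimage[OF assms(3) compact_imp_closed[OF assms(1)] closed_atMost])
  then have "compact (C \<inter> g -` {..\<beta>})"
    using compact_Int_closed[OF assms(1)] by (metis Int_left_absorb)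
  then have "compact F"
    unfolding F_def by (rule compact_Int_closed) (intro closed_INT ballI
      closed_Collect_le[OF continuous_on_const continuous_on_dist[OF continuous_on_id continuous_on_const]])
  have far: "x \<in> F" if "x \<in> C" "g x \<le> \<beta>" "\<forall>c\<in>Cs. \<not> dist x c < e" for x
    using that by (auto simp: F_def not_less)
  show thesis
  proof (cases "F = {}")
    case True
    show thesis
      by (rule that[of 1]) (use far True in \<open>auto simp: Cs_def\<close>)
  next
    case False
    then obtain x0 where x0: "x0 \<in> F" and min: "\<And>x. x \<in> F \<Longrightarrow> k x0 \<le> k x"
      using continuous_attains_inf[OF \<open>compact F\<close>] continuous_on_subset[OF assms(2)]
      by (metis F_def Int_lower1 inf.coboundedI1)
    have "\<alpha> < k x0"
    proof (rule ccontr)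
      assume "\<not> \<alpha> < k x0"
      then have "x0 \<in> Cs" using x0 by (auto simp: F_def Cs_def)
      then show False using x0 \<open>e > 0\<close> by (force simp: F_def)
    qed
    show thesis
    proof (rule that[of "k x0 - \<alpha>"])
      fix x assume "x \<in> C" "g x \<le> \<beta>" "k x < \<alpha> + (k x0 - \<alpha>)"
      then show "\<exists>c\<in>C. k c \<le> \<alpha> \<and> g c \<le> \<beta> \<and> dist x c < e"
        using far[of x] min[of x] by (force simp: Cs_def)
    qed (use \<open>\<alpha> < k x0\<close> in simp)
  qed
qed

lemma S_eps_penalty_bounds:
  assumes "\<epsilon> > 0" "x \<in> S_eps f h C \<epsilon> y" "x0 \<in> S_set h C y" "0 \<le> f y x0"
  shows "x \<in> C" "h y x0 \<le> h y x" "h y x - h y x0 \<le> \<epsilon> * ((f y x0)\<^sup>2 - (f y x)\<^sup>2)"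
    and "f y x \<le> f y x0"
proof -
  show "x \<in> C" and "h y x0 \<le> h y x"
    using assms(2,3) by (auto simp: S_eps_def S_set_def argmin_set_def)
  moreover have "h y x + \<epsilon> * (f y x)\<^sup>2 \<le> h y x0 + \<epsilon> * (f y x0)\<^sup>2"
    using assms(2,3) by (auto simp: S_eps_def S_set_def argmin_set_def)
  ultimately show "h y x - h y x0 \<le> \<epsilon> * ((f y x0)\<^sup>2 - (f y x)\<^sup>2)"
    by (simp add: algebra_simps)
  with \<open>h y x0 \<le> h y x\<close> have "\<epsilon> * (f y x)\<^sup>2 \<le> \<epsilon> * (f y x0)\<^sup>2"
    by (simp add: algebra_simps)
  then have "(f y x)\<^sup>2 \<le> (f y x0)\<^sup>2"
    using assms(1) by simp
  then show "f y x \<le> f y x0"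
    using assms(4) power2_le_iff_abs_le by fastforce
qed

lemma S_eps_gap_le:
  assumes "\<epsilon> > 0" "x \<in> S_eps f h C \<epsilon> y" "xstar \<in> S_tilde f h C y" "xt \<in> S_set h C y"
    and "L-lipschitz_on C (f y)" "\<forall>z\<in>C. 0 \<le> f y z" "0 \<le> \<delta>"
    and "(norm (x - xt))\<^sup>2 \<le> \<delta> * (h y x - h y xstar)"
  shows "f y xstar - f y x \<le> 2 * L\<^sup>2 * \<delta> * f y xstar * \<epsilon>"
proof -
  let ?\<beta> = "f y xstar"
  define d where "d = ?\<beta> - f y x"
  have xstar: "xstar \<in> S_set h C y" "xstar \<in> C" and "(f y xstar)\<^sup>2 \<le> (f y xt)\<^sup>2"
    using assms(3,4) by (auto simp: S_tilde_def S_set_def argmin_set_def)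
  moreover have "xt \<in> C"
    using assms(4) by (simp add: S_set_def argmin_set_def)
  ultimately have "0 \<le> ?\<beta>" and "?\<beta> \<le> f y xt"
    using assms(6) power2_le_iff_abs_le[of "f y xt" ?\<beta>] by auto
  note pen = S_eps_penalty_bounds[OF assms(1,2) xstar(1) \<open>0 \<le> ?\<beta>\<close>]
  have "0 \<le> d"
    using pen(4) by (simp add: d_def)
  have "f y xt - f y x \<le> L * norm (x - xt)"
    using abs_ge_self[of "f y xt - f y x"] lipschitz_on_normD[OF assms(5) \<open>xt \<in> C\<close> pen(1)]
    by (simp add: norm_minus_commute[of xt x])
  with \<open>?\<beta> \<le> f y xt\<close> have dL: "d \<le> L * norm (x - xt)"
    by (simp add: d_def)
  have "h y x - h y xstar \<le> \<epsilon> * (d * (?\<beta> + f y x))"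
    using pen(3) by (simp add: d_def power2_eq_square algebra_simps)
  also have "\<dots> \<le> \<epsilon> * (d * (2 * ?\<beta>))"
    using assms(1) \<open>0 \<le> d\<close> pen(4) by (intro mult_left_mono) auto
  finally have gap: "h y x - h y xstar \<le> 2 * ?\<beta> * \<epsilon> * d"
    by (simp add: algebra_simps)
  have "d\<^sup>2 \<le> (L * norm (x - xt))\<^sup>2"
    using dL \<open>0 \<le> d\<close> by (rule power_mono)
  also have "\<dots> = L\<^sup>2 * (norm (x - xt))\<^sup>2"
    by (simp add: power_mult_distrib)
  also have "\<dots> \<le> L\<^sup>2 * (\<delta> * (h y x - h y xstar))"
    using assms(8) by (simp add: mult_left_mono)
  also have "\<dots> \<le> L\<^sup>2 * (\<delta> * (2 * ?\<beta> * \<epsilon> * d))"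
    using gap assms(7) by (intro mult_left_mono) auto
  finally have dd: "d * d \<le> (2 * L\<^sup>2 * \<delta> * ?\<beta> * \<epsilon>) * d"
    by (simp add: power2_eq_square algebra_simps)
  have "d \<le> 2 * L\<^sup>2 * \<delta> * ?\<beta> * \<epsilon>"
  proof (cases "d = 0")
    case True
    then show ?thesis
      using assms(1,7) \<open>0 \<le> ?\<beta>\<close> by simp
  next
    case False
    then show ?thesis
      using dd \<open>0 \<le> d\<close> mult_le_cancel_right_pos[of d d] by simp
  qed
  then show ?thesis
    by (simp add: d_def)
qed

lemma S_eps_gap_eventually_linear:
  fixes C :: "'x::real_normed_vector set"
  assumes "compact C" "continuous_on C (f y)" "continuous_on C (h y)" "L-lipschitz_on C (f y)"
    and "\<forall>z\<in>C. 0 \<le> f y z" "xstar \<in> S_tilde f h C y" "\<epsilon>0 > 0" "0 \<le> \<delta>"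
    and error_bound:
      "\<forall>x \<in> {c + u | c u. c \<in> {z \<in> C. h y z \<le> h y xstar \<and> f y z \<le> f y xstar} \<and> u \<in> ball 0 \<epsilon>0}.
         \<exists>xt \<in> {z \<in> C. h y z \<le> h y xstar \<and> f y z \<le> f y xstar}.
           (norm (x - xt))\<^sup>2 \<le> \<delta> * (max (h y x - h y xstar) 0 + max (f y x - f y xstar) 0)"
  shows "\<forall>\<^sub>F \<epsilon> in at_right 0. \<forall>x\<in>S_eps f h C \<epsilon> y. f y xstar - f y x \<le> 2 * L\<^sup>2 * \<delta> * f y xstar * \<epsilon>"
proof -
  let ?\<alpha> = "h y xstar" and ?\<beta> = "f y xstar"
  have xstar: "xstar \<in> S_set h C y" "xstar \<in> C"
    using assms(6) by (auto simp: S_tilde_def S_set_def argmin_set_def)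
  then have "0 \<le> ?\<beta>"
    using assms(5) by blast
  obtain d where "d > 0" and near:
    "\<And>x. x \<in> C \<Longrightarrow> f y x \<le> ?\<beta> \<Longrightarrow> h y x < ?\<alpha> + d \<Longrightarrow>
       \<exists>c\<in>C. h y c \<le> ?\<alpha> \<and> f y c \<le> ?\<beta> \<and> dist x c < \<epsilon>0"
    using near_joint_sublevel_set[OF assms(1,3,2,7)] by blast
  have "((\<lambda>\<epsilon>. \<epsilon> * ?\<beta>\<^sup>2) \<longlongrightarrow> 0 * ?\<beta>\<^sup>2) (at_right 0)"
    by (intro tendsto_intros)
  then have "\<forall>\<^sub>F \<epsilon> in at_right 0. \<epsilon> * ?\<beta>\<^sup>2 < d"
    using \<open>d > 0\<close> by (simp add: order_tendstoD(2))
  then show ?thesis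
  proof (rule eventually_mono[OF eventually_conj[OF eventually_at_right_less]], intro ballI)
    fix \<epsilon> x assume \<epsilon>: "0 < \<epsilon> \<and> \<epsilon> * ?\<beta>\<^sup>2 < d" and x: "x \<in> S_eps f h C \<epsilon> y"
    note pen = S_eps_penalty_bounds[OF conjunct1[OF \<epsilon>] x xstar(1) \<open>0 \<le> ?\<beta>\<close>]
    have "\<epsilon> * ((f y xstar)\<^sup>2 - (f y x)\<^sup>2) \<le> \<epsilon> * ?\<beta>\<^sup>2"
      using \<epsilon> by (simp add: mult_left_mono)
    with pen(3) \<epsilon> have "h y x < ?\<alpha> + d"
      by linarith
    then obtain c where c: "c \<in> C" "h y c \<le> ?\<alpha>" "f y c \<le> ?\<beta>" "dist x c < \<epsilon>0"
      using near[OF pen(1) pen(4)] by blast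
    have "x = c + (x - c)" "x - c \<in> ball 0 \<epsilon>0"
      using c(4) by (auto simp: dist_norm norm_minus_commute)
    then obtain xt where xt: "xt \<in> C" "h y xt \<le> ?\<alpha>"
      and eb: "(norm (x - xt))\<^sup>2 \<le> \<delta> * (max (h y x - ?\<alpha>) 0 + max (f y x - ?\<beta>) 0)"
      using error_bound[rule_format, of x] c(1-3) by blast
    have "xt \<in> S_set h C y"
      using xt xstar(1) by (force simp: S_set_def argmin_set_def)
    moreover have "(norm (x - xt))\<^sup>2 \<le> \<delta> * (h y x - ?\<alpha>)"
      using eb pen(2,4) by simp
    ultimately show "?\<beta> - f y x \<le> 2 * L\<^sup>2 * \<delta> * ?\<beta> * \<epsilon>"
      using S_eps_gap_le[OF conjunct1[OF \<epsilon>] x assms(6) _ assms(4,5,8)] by blast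
  qed
qed

lemma S_eps_objective_gap_bigo:
  assumes "\<forall>\<epsilon>>0. xt \<epsilon> \<in> S_eps f h C \<epsilon> y" "x0 \<in> S_set h C y" "0 \<le> f y x0"
  shows "(\<lambda>\<epsilon>. h y (xt \<epsilon>) - h y x0) \<in> O[at_right 0](\<lambda>\<epsilon>. \<epsilon>)"
proof (rule bigoI[where c = "(f y x0)\<^sup>2"], rule eventually_mono[OF eventually_at_right_less])
  fix \<epsilon> :: real assume "0 < \<epsilon>"
  note pen = S_eps_penalty_bounds[OF \<open>0 < \<epsilon>\<close> assms(1)[rule_format, OF \<open>0 < \<epsilon>\<close>] assms(2,3)]
  have "\<epsilon> * ((f y x0)\<^sup>2 - (f y (xt \<epsilon>))\<^sup>2) \<le> \<epsilon> * (f y x0)\<^sup>2"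
    using \<open>0 < \<epsilon>\<close> by (simp add: mult_left_mono)
  with pen(3) have "h y (xt \<epsilon>) - h y x0 \<le> \<epsilon> * (f y x0)\<^sup>2"
    by linarith
  then show "norm (h y (xt \<epsilon>) - h y x0) \<le> (f y x0)\<^sup>2 * norm \<epsilon>"
    using pen(2) \<open>0 < \<epsilon>\<close> by (simp add: mult.commute)
qed

lemma opt_P_eps_value_le_opt_P_tilde:
  assumes "opt_P_tilde f h K C ystar" "xstar \<in> S_tilde f h C ystar"
    and "\<epsilon> > 0" "opt_P_eps f h K C \<epsilon> ye" "xe \<in> S_eps f h C \<epsilon> ye"
    and "S_tilde f h C ye \<noteq> {}" "\<forall>z\<in>C. 0 \<le> f ye z"
  shows "f ye xe \<le> f ystar xstar"
proof -
  obtain x where x: "x \<in> S_tilde f h C ye"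
    using assms(6) by blast
  then have "x \<in> S_set h C ye" "x \<in> C"
    by (auto simp: S_tilde_def S_set_def argmin_set_def)
  then have "f ye xe \<le> f ye x"
    using S_eps_penalty_bounds(4)[OF assms(3,5)] assms(7) by blast
  also have "f ye x \<le> f ystar xstar"
    using assms(1,2,4) x by (auto simp: opt_P_tilde_def opt_P_eps_def)
  finally show ?thesis .
qed

lemma opt_P_eps_value_gap_bigo:
  assumes "opt_P_tilde f h K C ystar" "xstar \<in> S_tilde f h C ystar"
    and "\<forall>\<epsilon>>0. opt_P_eps f h K C \<epsilon> (yeps \<epsilon>)" "\<forall>\<epsilon>>0. xeps \<epsilon> \<in> S_eps f h C \<epsilon> (yeps \<epsilon>)"
    and "\<And>\<epsilon>. S_eps f h C \<epsilon> ystar \<noteq> {}" "\<And>y. S_tilde f h C y \<noteq> {}" "\<And>y. \<forall>z\<in>C. 0 \<le> f y z"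
    and "\<forall>\<^sub>F \<epsilon> in at_right 0. \<forall>x\<in>S_eps f h C \<epsilon> ystar. f ystar xstar - f ystar x \<le> c * \<epsilon>"
  shows "(\<lambda>\<epsilon>. f ystar xstar - f (yeps \<epsilon>) (xeps \<epsilon>)) \<in> O[at_right 0](\<lambda>\<epsilon>. \<epsilon>)"
proof (intro bigoI[where c = c] eventually_mono[OF eventually_conj[OF eventually_at_right_less assms(8)]])
  fix \<epsilon> :: real
  assume \<epsilon>: "0 < \<epsilon> \<and> (\<forall>x\<in>S_eps f h C \<epsilon> ystar. f ystar xstar - f ystar x \<le> c * \<epsilon>)"
  obtain x where x: "x \<in> S_eps f h C \<epsilon> ystar"
    using assms(5) by blast
  have "f ystar x \<le> f (yeps \<epsilon>) (xeps \<epsilon>)"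
    using assms(1,3,4) x \<epsilon> unfolding opt_P_eps_def opt_P_tilde_def by blast
  moreover have "f (yeps \<epsilon>) (xeps \<epsilon>) \<le> f ystar xstar"
    using \<epsilon> assms(3,4) by (intro opt_P_eps_value_le_opt_P_tilde[OF assms(1,2) _ _ _ assms(6,7)]) auto
  ultimately show "norm (f ystar xstar - f (yeps \<epsilon>) (xeps \<epsilon>)) \<le> c * norm \<epsilon>"
    using \<epsilon> x by force
qed

theorem theorem4p2:
  fixes K :: "(real^'n) set" and A :: "real^'m^'p" and b :: "real^'p"
    and f h :: "real^'n \<Rightarrow> real^'m \<Rightarrow> real"
    and ystar :: "real^'n" and xstar :: "real^'m"
    and \<epsilon>0 \<delta> :: real
    and yeps :: "real \<Rightarrow> real^'n" and xeps :: "real \<Rightarrow> real^'m"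
  assumes K: "K \<noteq> {}" "convex K" "closed K" "bounded K"
    and C: "polyset A b \<noteq> {}" "bounded (polyset A b)"
    and f_C1: "C1_fun (\<lambda>(y, x). f y x)"
    and h_C1: "C1_fun (\<lambda>(y, x). h y x)"
    and f_cvx: "\<forall>y\<in>K. convex_on UNIV (f y)"
    and h_cvx: "\<forall>y\<in>K. convex_on UNIV (h y)"
    and f_pos: "\<forall>y x. f y x > 0"
    and ystar: "opt_P_tilde f h K (polyset A b) ystar"
    and xstar: "xstar \<in> S_tilde f h (polyset A b) ystar"
    and eb: "\<epsilon>0 > 0" "\<delta> > 0"
    and error_bound:
      "\<forall>x \<in> {c + u | c u. c \<in> {z \<in> polyset A b. h ystar z \<le> h ystar xstar \<and> f ystar z \<le> f ystar xstar}
                            \<and> u \<in> ball 0 \<epsilon>0}.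
         \<exists>xt \<in> {z \<in> polyset A b. h ystar z \<le> h ystar xstar \<and> f ystar z \<le> f ystar xstar}.
           (norm (x - xt))\<^sup>2 \<le> \<delta> * (max (h ystar x - h ystar xstar) 0 + max (f ystar x - f ystar xstar) 0)"
    and yeps: "\<forall>\<epsilon>>0. opt_P_eps f h K (polyset A b) \<epsilon> (yeps \<epsilon>)"
    and xeps: "\<forall>\<epsilon>>0. xeps \<epsilon> \<in> S_eps f h (polyset A b) \<epsilon> (yeps \<epsilon>)"
  shows "(\<lambda>\<epsilon>. f ystar xstar - f (yeps \<epsilon>) (xeps \<epsilon>)) \<in> o[at_right 0](\<lambda>\<epsilon>. sqrt \<epsilon>)
       \<and> (\<forall>\<tau>>0. (\<lambda>\<epsilon>. f ystar xstar - f (yeps \<epsilon>) (xeps \<epsilon>)) \<in> o[at_right 0](\<lambda>\<epsilon>. \<epsilon> powr (1 - \<tau>)))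
       \<and> (\<forall>xt :: real \<Rightarrow> real^'m. (\<forall>\<epsilon>>0. xt \<epsilon> \<in> S_eps f h (polyset A b) \<epsilon> ystar) \<longrightarrow>
            (\<forall>\<tau>>0. (\<lambda>\<epsilon>. h ystar (xt \<epsilon>) - h ystar xstar) \<in> o[at_right 0](\<lambda>\<epsilon>. \<epsilon> powr (1 - \<tau>))))"
proof -
  let ?C = "polyset A b"
  have "compact ?C"
    using C(2) closed_polyset by (simp add: compact_eq_bounded_closed)
  have cont: "\<And>y. continuous_on ?C (f y)" "\<And>y. continuous_on ?C (h y)"
    using continuous_on_slice C1_fun_imp_continuous_on f_C1 h_C1 by blast+
  have f_nonneg: "\<And>y. \<forall>z\<in>?C. 0 \<le> f y z"
    using f_pos by (simp add: less_imp_le)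
  obtain L where "L-lipschitz_on ({ystar} \<times> ?C) (\<lambda>(y, x). f y x)"
    using C1_fun_imp_lipschitz_on[OF f_C1] C(2) by (metis bounded_Times bounded_insert bounded_empty)
  then have "L-lipschitz_on ?C (f ystar)"
    by (rule lipschitz_on_slice)
  then have "\<forall>\<^sub>F \<epsilon> in at_right 0. \<forall>x\<in>S_eps f h ?C \<epsilon> ystar.
      f ystar xstar - f ystar x \<le> 2 * L\<^sup>2 * \<delta> * f ystar xstar * \<epsilon>"
    using eb
    by (intro S_eps_gap_eventually_linear[where f = f and h = h and y = ystar,
          OF \<open>compact ?C\<close> cont _ f_nonneg xstar _ _ error_bound]) auto
  then have value_gap: "(\<lambda>\<epsilon>. f ystar xstar - f (yeps \<epsilon>) (xeps \<epsilon>)) \<in> O[at_right 0](\<lambda>\<epsilon>. \<epsilon>)"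
    using S_eps_nonempty[of ?C f _ h] S_tilde_nonempty[of ?C f _ h] \<open>compact ?C\<close> C(1) cont
    by (intro opt_P_eps_value_gap_bigo[OF ystar xstar yeps xeps _ _ f_nonneg]) auto
  have "xstar \<in> S_set h ?C ystar" "0 \<le> f ystar xstar"
    using xstar f_pos by (auto simp: S_tilde_def argmin_set_def less_imp_le)
  then have objective_gap: "(\<lambda>\<epsilon>. h ystar (xt \<epsilon>) - h ystar xstar) \<in> O[at_right 0](\<lambda>\<epsilon>. \<epsilon>)"
    if "\<forall>\<epsilon>>0. xt \<epsilon> \<in> S_eps f h ?C \<epsilon> ystar" for xt
    by (intro S_eps_objective_gap_bigo[OF that])
  have sqrt: "(\<lambda>\<epsilon>::real. \<epsilon>) \<in> o[at_right 0](\<lambda>\<epsilon>. sqrt \<epsilon>)"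
    and powr: "\<And>\<tau>. \<tau> > 0 \<Longrightarrow> (\<lambda>\<epsilon>::real. \<epsilon>) \<in> o[at_right 0](\<lambda>\<epsilon>. \<epsilon> powr (1 - \<tau>))"
    by real_asymp+
  show ?thesis
    using landau_o.big_small_trans[OF value_gap sqrt] landau_o.big_small_trans[OF value_gap powr]
      landau_o.big_small_trans[OF objective_gap powr] by blast
qed

end
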